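(* Assume the standing setting of the context, and let $\varrho,\sigma$ be continuous strictly positive densities on $D\times(0,T)$ (with respect to Lebesgue measure) of two measures in $\mathbb{M}_\nu$; set $v=\sigma/\varrho$. Suppose that for a.e. $t\in(0,T)$ $$\int_D\varrho(x,t)\,dx=\nu(D)+\int_0^t\int_Dc\,\varrho\,dx\,ds,\qquad \int_D\sigma(x,t)\,dx\le\nu(D)+\int_0^t\int_Dc\,\sigma\,dx\,ds,$$ and that for every $\lambda>0$ and a.e. $t\in(0,T)$ $$\int_De^{\lambda(1-v(x,t))}\varrho(x,t)\,dx\le1.$$ Then $v\equiv1$ on $D\times(0,T)$, i.e. $\sigma=\varrho$.
   Context: $T>0$; $D\subset\mathbb{R}^d$ open with exhaustion $(D_k)$ (bounded open, increasing, $\overline{D_k}\subset D_{k+1}$, $\bigcup D_k=D$); $\nu$ a Borel probability measure on $D$; $c\le0$. Coefficients $a^{ij},b^i,c$ Borel on $D\times[0,T]$, $A=(a^{ij})$ symmetric, satisfying (H1): for each $k$ there are $m_k,M_k>0$ with $m_k|y|^2\le(A(x,t)y,y)\le M_k|y|^2$ on $D_k\times[0,T]$; and (H2): for each $k$ there is $\Lambda_k$ with $|a^{ij}(x,t)-a^{ij}(y,t)|\le\Lambda_k|x-y|$ for $x,y\in D_k$, $t\in[0,T]$. Moreover $b\in L^p_{loc}(D\times(0,T))$, $c\in L^{p/2}_{loc}(D\times(0,T))$ for some $p>d+2$. $L\varphi=a^{ij}\partial_{x_i}\partial_{x_j}\varphi+b^i\partial_{x_i}\varphi+c\varphi$. Solutions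 of the Cauchy problem $\partial_t\mu=\partial_{x_i}\partial_{x_j}(a^{ij}\mu)-\partial_{x_i}(b^i\mu)+c\mu$, $\mu|_{t=0}=\nu$, are flows $(\mu_t)$ of Borel measures on $D$ (with $t\mapsto\mu_t(B)$ measurable, $\mu=\mu_t\,dt$ locally finite on $D\times(0,T)$) such that $a^{ij},b^i,c\in L^1(\overline{D_k}\times J,|\mu|)$ for all $k$ and compact $J\subset(0,T)$ and for every $\varphi\in C_0^\infty(D)$ and a.e. $t$: $\int\varphi\,d\mu_t-\int\varphi\,d\nu=\lim_{\varepsilon\to0+}\int_\varepsilon^t\int_DL\varphi\,d\mu_s\,ds$. $\mathcal{M}_\nu$: such solutions with $\mu_t\ge0$, $|c|\in L^1(\mu)$ and $\mu_t(D)\le\nu(D)+\int_0^t\int_Dc\,d\mu_s\,ds$ for a.e. $t$. $\mathbb{M}_\nu$: those $\mu\in\mathcal{M}_\nu$ with $b\in L^2(\mu,D_k\times[0,T])$ for all $k$. *)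

theory Defs
  imports "HOL-Analysis.Analysis"
begin

text \<open>Points of R^d are vectors of type real^'n (so d = CARD('n)); time is real.
  A flow of (nonnegative) Borel measures on D is a family mu :: real => (real^'n) measure,
  each mu t a Borel measure on R^d carried by D.\<close>

definition exhaustion :: "(real^'n::finite) set \<Rightarrow> (nat \<Rightarrow> (real^'n) set) \<Rightarrow> bool" where
  "exhaustion D Dk \<longleftrightarrow>
     (\<forall>k. open (Dk k) \<and> bounded (Dk k) \<and> Dk k \<subseteq> Dk (Suc k) \<and> closure (Dk k) \<subseteq> Dk (Suc k))
     \<and> (\<Union>k. Dk k) = D"

definition pd :: "'n::finite \<Rightarrow> (real^'n \<Rightarrow> real) \<Rightarrow> real^'n \<Rightarrow> real" where
  "pd i f x = frechet_derivative f (at x) (axis i 1)"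

fun pds :: "('n::finite) list \<Rightarrow> (real^'n \<Rightarrow> real) \<Rightarrow> real^'n \<Rightarrow> real" where
  "pds [] f = f"
| "pds (i # is) f = pd i (pds is f)"

definition smooth_fun :: "(real^'n::finite \<Rightarrow> real) \<Rightarrow> bool" where
  "smooth_fun f \<longleftrightarrow> (\<forall>is. \<forall>x. pds is f differentiable (at x))"

definition test_fun :: "(real^'n::finite) set \<Rightarrow> (real^'n \<Rightarrow> real) \<Rightarrow> bool" where
  "test_fun D \<phi> \<longleftrightarrow> smooth_fun \<phi> \<and> compact (closure {x. \<phi> x \<noteq> 0})
      \<and> closure {x. \<phi> x \<noteq> 0} \<subseteq> D"

definition Lop :: "(real^'n::finite \<Rightarrow> real \<Rightarrow> 'n \<Rightarrow> 'n \<Rightarrow> real) \<Rightarrow> (real^'n \<Rightarrow> real \<Rightarrow> real^'n)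
    \<Rightarrow> (real^'n \<Rightarrow> real \<Rightarrow> real) \<Rightarrow> (real^'n \<Rightarrow> real) \<Rightarrow> real^'n \<Rightarrow> real \<Rightarrow> real" where
  "Lop a b c \<phi> x t = (\<Sum>i\<in>UNIV. \<Sum>j\<in>UNIV. a x t i j * pd i (pd j \<phi>) x)
      + (\<Sum>i\<in>UNIV. b x t $ i * pd i \<phi> x) + c x t * \<phi> x"

text \<open>Local L^p integrability (w.r.t. Lebesgue measure on R^d x R) on a set U,
  for a nonnegative function f (typically a norm / absolute value).\<close>

definition Lp_loc :: "((real^'n::finite) \<times> real) set \<Rightarrow> ((real^'n) \<times> real \<Rightarrow> real) \<Rightarrow> real \<Rightarrow> bool" where
  "Lp_loc U f p \<longleftrightarrow> (\<forall>K. compact K \<and> K \<subseteq> U \<longrightarrow>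
       (\<integral>\<^sup>+z. indicator K z * ennreal (f z powr p) \<partial>lborel) < \<infinity>)"

definition flow_int :: "real \<Rightarrow> (real \<Rightarrow> (real^'n::finite) measure) \<Rightarrow> (real^'n \<Rightarrow> real \<Rightarrow> real)
    \<Rightarrow> ((real^'n) \<times> real) set \<Rightarrow> ennreal" where
  "flow_int T \<mu> f S = (\<integral>\<^sup>+t. indicator {0<..<T} t *
       (\<integral>\<^sup>+x. indicator S (x, t) * ennreal (f x t) \<partial>\<mu> t) \<partial>lborel)"

definition standing_setting :: "real \<Rightarrow> (real^'n::finite) set \<Rightarrow> (nat \<Rightarrow> (real^'n) set)
    \<Rightarrow> (real^'n) measure \<Rightarrow> (real^'n \<Rightarrow> real \<Rightarrow> 'n \<Rightarrow> 'n \<Rightarrow> real) \<Rightarrow> (real^'n \<Rightarrow> real \<Rightarrow> real^'n)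
    \<Rightarrow> (real^'n \<Rightarrow> real \<Rightarrow> real) \<Rightarrow> real \<Rightarrow> bool" where
  "standing_setting T D Dk \<nu> a b c p \<longleftrightarrow>
     T > 0 \<and> open D \<and> exhaustion D Dk
     \<and> sets \<nu> = sets borel \<and> emeasure \<nu> (space \<nu>) = 1 \<and> emeasure \<nu> (- D) = 0
     \<and> (\<forall>x\<in>D. \<forall>t\<in>{0..T}. c x t \<le> 0)
     \<and> (\<forall>i j. set_borel_measurable borel (D \<times> {0..T}) (\<lambda>(x, t). a x t i j))
     \<and> (\<forall>i. set_borel_measurable borel (D \<times> {0..T}) (\<lambda>(x, t). b x t $ i))
     \<and> set_borel_measurable borel (D \<times> {0..T}) (\<lambda>(x, t). c x t)
     \<and> (\<forall>x\<in>D. \<forall>t\<in>{0..T}. \<forall>i j. a x t i j = a x t j i)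
     \<and> (\<forall>k. \<exists>m M. m > 0 \<and> M > 0 \<and> (\<forall>x\<in>Dk k. \<forall>t\<in>{0..T}. \<forall>y::real^'n.
           m * (norm y)\<^sup>2 \<le> (\<Sum>i\<in>UNIV. \<Sum>j\<in>UNIV. a x t i j * y $ i * y $ j)
           \<and> (\<Sum>i\<in>UNIV. \<Sum>j\<in>UNIV. a x t i j * y $ i * y $ j) \<le> M * (norm y)\<^sup>2))
     \<and> (\<forall>k. \<exists>\<Lambda>. \<forall>x\<in>Dk k. \<forall>y\<in>Dk k. \<forall>t\<in>{0..T}. \<forall>i j.
           \<bar>a x t i j - a y t i j\<bar> \<le> \<Lambda> * dist x y)
     \<and> p > real CARD('n) + 2
     \<and> Lp_loc (D \<times> {0<..<T}) (\<lambda>(x, t). norm (b x t)) p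
     \<and> Lp_loc (D \<times> {0<..<T}) (\<lambda>(x, t). \<bar>c x t\<bar>) (p / 2)"

definition nn_solution :: "real \<Rightarrow> (real^'n::finite) set \<Rightarrow> (nat \<Rightarrow> (real^'n) set)
    \<Rightarrow> (real^'n) measure \<Rightarrow> (real^'n \<Rightarrow> real \<Rightarrow> 'n \<Rightarrow> 'n \<Rightarrow> real) \<Rightarrow> (real^'n \<Rightarrow> real \<Rightarrow> real^'n)
    \<Rightarrow> (real^'n \<Rightarrow> real \<Rightarrow> real) \<Rightarrow> (real \<Rightarrow> (real^'n) measure) \<Rightarrow> bool" where
  "nn_solution T D Dk \<nu> a b c \<mu> \<longleftrightarrow>
     (\<forall>t\<in>{0<..<T}. sets (\<mu> t) = sets borel \<and> emeasure (\<mu> t) (- D) = 0)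
     \<and> (\<forall>B\<in>sets borel. (\<lambda>t. emeasure (\<mu> t) B) \<in> borel_measurable (restrict_space lborel {0<..<T}))
     \<and> (\<forall>K. compact K \<and> K \<subseteq> D \<times> {0<..<T} \<longrightarrow> flow_int T \<mu> (\<lambda>x t. 1) K < \<infinity>)
     \<and> (\<forall>k J. compact J \<and> J \<subseteq> {0<..<T} \<longrightarrow>
          (\<forall>i j. flow_int T \<mu> (\<lambda>x t. \<bar>a x t i j\<bar>) (closure (Dk k) \<times> J) < \<infinity>)
          \<and> (\<forall>i. flow_int T \<mu> (\<lambda>x t. \<bar>b x t $ i\<bar>) (closure (Dk k) \<times> J) < \<infinity>)
          \<and> flow_int T \<mu> (\<lambda>x t. \<bar>c x t\<bar>) (closure (Dk k) \<times> J) < \<infinity>)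
     \<and> (\<forall>\<phi>. test_fun D \<phi> \<longrightarrow>
          (AE t in lborel. t \<in> {0<..<T} \<longrightarrow>
             ((\<lambda>\<epsilon>. \<integral>s\<in>{\<epsilon>..t}. (\<integral>x. Lop a b c \<phi> x s \<partial>\<mu> s) \<partial>lborel)
                \<longlongrightarrow> (\<integral>x. \<phi> x \<partial>\<mu> t) - (\<integral>x. \<phi> x \<partial>\<nu>)) (at_right 0)))"

definition in_M_nu where
  "in_M_nu T D Dk \<nu> a b c \<mu> \<longleftrightarrow>
     nn_solution T D Dk \<nu> a b c \<mu>
     \<and> flow_int T \<mu> (\<lambda>x t. \<bar>c x t\<bar>) (D \<times> UNIV) < \<infinity>
     \<and> (AE t in lborel. t \<in> {0<..<T} \<longrightarrow>
          emeasure (\<mu> t) D \<noteq> \<infinity> \<and>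
          measure (\<mu> t) D \<le> measure \<nu> D + (\<integral>s\<in>{0..t}. (\<integral>x\<in>D. c x s \<partial>\<mu> s) \<partial>lborel))"

definition in_MM_nu where
  "in_MM_nu T D Dk \<nu> a b c \<mu> \<longleftrightarrow>
     in_M_nu T D Dk \<nu> a b c \<mu>
     \<and> (\<forall>k. flow_int T \<mu> (\<lambda>x t. (norm (b x t))\<^sup>2) (Dk k \<times> {0..T}) < \<infinity>)"

definition dens_flow :: "(real^'n::finite) set \<Rightarrow> (real^'n \<Rightarrow> real \<Rightarrow> real) \<Rightarrow> real \<Rightarrow> (real^'n) measure" where
  "dens_flow D \<rho> t = density lborel (\<lambda>x. indicator D x * ennreal (\<rho> x t))"

end

(* If rho > sigma at some point, continuity gives a ball B and a neighbourhood of times on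
   which 1 - sigma/rho >= d > 0 and rho >= r > 0.  At almost every such time the integral of
   exp (l (1 - v)) rho over D is then at least exp (l d) r |B|, which exceeds 1 for large l;
   hence rho <= sigma.  Since c <= 0, this gives int_0^t int c sigma <= int_0^t int c rho, and the
   two mass balances force int_D sigma(.,t) <= int_D rho(.,t) for almost every t.  So the
   continuous function sigma - rho >= 0 has zero integral over D at almost every time, and
   therefore vanishes. *)

theory Submission
  imports Defs "HOL-Real_Asymp.Real_Asymp"
begin

lemma eventually_nhds_continuous_on_gt:
  fixes f :: "'a::t2_space \<Rightarrow> 'b::linorder_topology"
  assumes "open S" "continuous_on S f" "z \<in> S" "a < f z"
  shows "\<forall>\<^sub>F y in nhds z. y \<in> S \<and> a < f y"
proof -
  have "isCont f z"
    using assms(1-3) continuous_on_eq_continuous_at by blast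
  then have "(f \<longlongrightarrow> f z) (nhds z)"
    unfolding isCont_def tendsto_at_iff_tendsto_nhds .
  then have "\<forall>\<^sub>F y in nhds z. a < f y"
    using assms(4) by (rule order_tendstoD(1))
  with eventually_nhds_in_open[OF assms(1,3)] show ?thesis
    by (rule eventually_conj)
qed

lemma emeasure_lborel_ball_pos:
  fixes x :: "'a::euclidean_space"
  assumes "e > 0"
  shows "0 < emeasure lborel (ball x e)"
  using content_ball_pos[OF assms, of x] emeasure_lborel_ball_finite[of x e]
  by (simp add: emeasure_eq_ennreal_measure less_top)

lemma AE_lborel_eventually_nhds_ex:
  fixes t0 :: "'a::euclidean_space"
  assumes "\<forall>\<^sub>F t in nhds t0. P t" and "AE t in lborel. Q t"
  shows "\<exists>t. P t \<and> Q t"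
proof (rule ccontr)
  assume none: "\<nexists>t. P t \<and> Q t"
  obtain e where e: "e > 0" "\<forall>t. dist t t0 < e \<longrightarrow> P t"
    using assms(1) eventually_nhds_metric by blast
  have "AE t in lborel. t \<notin> ball t0 e"
    using assms(2) none e(2) by (auto elim!: AE_mp simp: dist_commute)
  then have "ball t0 e \<in> null_sets lborel"
    by (subst AE_iff_null_sets) auto
  then show False
    using emeasure_lborel_ball_pos[OF e(1), of t0] by (simp add: null_setsD1)
qed

lemma eventually_nhds_Pair_AE_obtain:
  fixes x0 :: "'a::metric_space" and t0 :: "'b::euclidean_space"
  assumes "\<forall>\<^sub>F z in nhds (x0, t0). P z" and "AE t in lborel. Q t"
  obtains e t where "e > 0" "Q t" "\<forall>x\<in>ball x0 e. P (x, t)"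
proof -
  obtain Px Pt where Px: "\<forall>\<^sub>F x in nhds x0. Px x" and Pt: "\<forall>\<^sub>F t in nhds t0. Pt t"
    and P: "\<And>x t. Px x \<Longrightarrow> Pt t \<Longrightarrow> P (x, t)"
    using assms(1) unfolding nhds_prod eventually_prod_filter by blast
  obtain e where "e > 0" "\<forall>x. dist x x0 < e \<longrightarrow> Px x"
    using Px eventually_nhds_metric by blast
  moreover obtain t where "Pt t" "Q t"
    using AE_lborel_eventually_nhds_ex[OF Pt assms(2)] by blast
  ultimately show thesis
    using P that by (auto simp: dist_commute)
qed

lemma set_nn_integral_ge_cmult_emeasure:
  assumes "B \<in> sets M" "B \<subseteq> A" "\<forall>x\<in>B. k \<le> f x"
  shows "ennreal k * emeasure M B \<le> (\<integral>\<^sup>+x\<in>A. ennreal (f x) \<partial>M)"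
proof -
  have "ennreal k * emeasure M B = (\<integral>\<^sup>+x. ennreal k * indicator B x \<partial>M)"
    using assms(1) by (simp add: nn_integral_cmult_indicator)
  also have "\<dots> \<le> (\<integral>\<^sup>+x\<in>A. ennreal (f x) \<partial>M)"
  proof (intro nn_integral_mono)
    fix x
    show "ennreal k * indicator B x \<le> ennreal (f x) * indicator A x"
      using assms(2,3) by (cases "x \<in> B") (auto simp: indicator_def subset_iff intro: ennreal_leI)
  qed
  finally show ?thesis .
qed

lemma set_nn_integral_diff_eq_0:
  fixes f g :: "'a \<Rightarrow> real"
  assumes "set_integrable M A f" "set_integrable M A g" "\<forall>x\<in>A. f x \<le> g x"
    and "(\<integral>x\<in>A. g x \<partial>M) \<le> (\<integral>x\<in>A. f x \<partial>M)"
  shows "(\<integral>\<^sup>+x\<in>A. ennreal (g x - f x) \<partial>M) = 0"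
proof -
  have int: "integrable M (\<lambda>x. indicator A x *\<^sub>R (g x - f x))"
    using set_integral_diff(1)[OF assms(2,1)] unfolding set_integrable_def .
  have "(\<integral>\<^sup>+x\<in>A. ennreal (g x - f x) \<partial>M) = (\<integral>\<^sup>+x. ennreal (indicator A x *\<^sub>R (g x - f x)) \<partial>M)"
    by (intro nn_integral_cong) (simp add: mult.commute indicator_mult_ennreal)
  also have "\<dots> = ennreal (\<integral>x\<in>A. g x - f x \<partial>M)"
    unfolding set_lebesgue_integral_def using assms(3)
    by (intro nn_integral_eq_integral[OF int] AE_I2) (simp add: indicator_def)
  also have "\<dots> = 0"
    using assms(4) by (simp add: set_integral_diff(2)[OF assms(2,1)] ennreal_eq_0_iff)
  finally show ?thesis .
qed

lemma set_borel_measurable_slice: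
  fixes h :: "'a::topological_space \<Rightarrow> 'b::topological_space \<Rightarrow> real"
  assumes "set_borel_measurable borel (A \<times> B) (\<lambda>(x, t). h x t)" "t \<in> B"
  shows "set_borel_measurable borel A (\<lambda>x. h x t)"
proof -
  have "(\<lambda>x. (x, t)) \<in> borel_measurable borel"
    by (intro borel_measurable_continuous_onI continuous_intros)
  from measurable_compose[OF this assms(1)[unfolded set_borel_measurable_def]]
  show ?thesis
    using assms(2) by (simp add: set_borel_measurable_def indicator_def)
qed

lemma set_borel_measurable_continuous_on_open:
  fixes g :: "'a::topological_space \<Rightarrow> real"
  assumes "open S" "continuous_on S g"
  shows "set_borel_measurable borel S g"
  unfolding set_borel_measurable_def using assms
  by (intro borel_measurable_continuous_on_indicator borel_open)

lemma integrable_pair_indicator_slices: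
  fixes h :: "'a::euclidean_space \<Rightarrow> real \<Rightarrow> real"
  assumes h: "integrable (lborel \<Otimes>\<^sub>M lborel) (\<lambda>(s, x). indicator (D \<times> {0<..<T}) (x, s) * h x s)"
  shows "AE s in lborel. s \<in> {0<..<T} \<longrightarrow> set_integrable lborel D (\<lambda>x. h x s)"
    and "t < T \<Longrightarrow> set_integrable lborel {0..t} (\<lambda>s. \<integral>x\<in>D. h x s \<partial>lborel)"
proof -
  have slice: "(\<lambda>x. indicator (D \<times> {0<..<T}) (x, s) * h x s) = (\<lambda>x. indicator D x *\<^sub>R h x s)"
    if "s \<in> {0<..<T}" for s
    using that by (simp add: indicator_def)
  show "AE s in lborel. s \<in> {0<..<T} \<longrightarrow> set_integrable lborel D (\<lambda>x. h x s)"
    using lborel_pair.AE_integrable_fst'[OF h]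
    by eventually_elim (auto simp: set_integrable_def slice)
  assume "t < T"
  have "integrable lborel
      (\<lambda>s. indicator {0..t} s *\<^sub>R (\<integral>x. indicator (D \<times> {0<..<T}) (x, s) * h x s \<partial>lborel))"
    using lborel_pair.integrable_fst'[OF h] by (intro integrable_mult_indicator) auto
  then show "set_integrable lborel {0..t} (\<lambda>s. \<integral>x\<in>D. h x s \<partial>lborel)"
    unfolding set_integrable_def set_lebesgue_integral_def
    \<comment> \<open>The slice at \<open>s = 0\<close> lies outside \<open>D \<times> {0<..<T}\<close>, so its integral is arbitrary;
      but a single point is a null set.\<close>
  proof (rule integrable_discrete_difference[where X="{0}", THEN iffD1, rotated -1])
    fix s :: real assume "s \<notin> {0}"
    then show "indicator {0..t} s *\<^sub>R (\<integral>x. indicator (D \<times> {0<..<T}) (x, s) * h x s \<partial>lborel)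
        = indicator {0..t} s *\<^sub>R (\<integral>x. indicator D x *\<^sub>R h x s \<partial>lborel)"
      using \<open>t < T\<close> slice[of s] by (auto simp: indicator_def)
  qed auto
qed

lemma set_integral_slices_mono:
  fixes h g :: "'a::euclidean_space \<Rightarrow> real \<Rightarrow> real"
  assumes "integrable (lborel \<Otimes>\<^sub>M lborel) (\<lambda>(s, x). indicator (D \<times> {0<..<T}) (x, s) * h x s)"
    and "integrable (lborel \<Otimes>\<^sub>M lborel) (\<lambda>(s, x). indicator (D \<times> {0<..<T}) (x, s) * g x s)"
    and "\<forall>x\<in>D. \<forall>s\<in>{0<..<T}. h x s \<le> g x s" "t < T"
  shows "(\<integral>s\<in>{0..t}. (\<integral>x\<in>D. h x s \<partial>lborel) \<partial>lborel) \<le> (\<integral>s\<in>{0..t}. (\<integral>x\<in>D. g x s \<partial>lborel) \<partial>lborel)"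
proof (rule set_integral_mono_AE)
  show "set_integrable lborel {0..t} (\<lambda>s. \<integral>x\<in>D. h x s \<partial>lborel)"
    "set_integrable lborel {0..t} (\<lambda>s. \<integral>x\<in>D. g x s \<partial>lborel)"
    using assms(1,2,4) by (auto intro: integrable_pair_indicator_slices(2))
  show "AE s\<in>{0..t} in lborel. (\<integral>x\<in>D. h x s \<partial>lborel) \<le> (\<integral>x\<in>D. g x s \<partial>lborel)"
    using integrable_pair_indicator_slices(1)[OF assms(1)] integrable_pair_indicator_slices(1)[OF assms(2)]
      AE_lborel_singleton[of 0]
  proof eventually_elim
    case (elim s)
    show ?case
    proof
      assume "s \<in> {0..t}"
      with elim \<open>t < T\<close> have "s \<in> {0<..<T}" by auto
      with elim assms(3) show "(\<integral>x\<in>D. h x s \<partial>lborel) \<le> (\<integral>x\<in>D. g x s \<partial>lborel)"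
        by (intro set_integral_mono) auto
    qed
  qed
qed

lemma exp_moments_unbounded:
  assumes "B \<in> sets M" "B \<subseteq> A" "0 < emeasure M B" "emeasure M B < \<infinity>"
    and "d > 0" "r > 0" "\<forall>x\<in>B. d \<le> u x \<and> r \<le> \<rho> x"
  obtains n :: nat where "1 < (\<integral>\<^sup>+x\<in>A. ennreal (exp (real (Suc n) * u x) * \<rho> x) \<partial>M)"
proof -
  define m where "m = measure M B"
  have m: "emeasure M B = ennreal m" "m > 0"
    using assms(3,4) by (auto simp: m_def emeasure_eq_ennreal_measure less_top)
  have "filterlim (\<lambda>n. exp (real (Suc n) * d) * (r * m)) at_top sequentially"
    using \<open>d > 0\<close> \<open>r > 0\<close> \<open>m > 0\<close> by real_asymp
  then have "\<forall>\<^sub>F n in sequentially. 1 < exp (real (Suc n) * d) * (r * m)"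
    by (rule filterlim_at_top_dense[THEN iffD1, rule_format])
  then obtain n where "1 < exp (real (Suc n) * d) * (r * m)"
    using eventually_happens'[OF sequentially_bot] by blast
  then have "1 < ennreal (exp (real (Suc n) * d) * (r * m))"
    by simp
  also have "\<dots> = ennreal (exp (real (Suc n) * d) * r) * emeasure M B"
    using \<open>r > 0\<close> m by (simp add: ennreal_mult mult.assoc)
  also have "\<dots> \<le> (\<integral>\<^sup>+x\<in>A. ennreal (exp (real (Suc n) * u x) * \<rho> x) \<partial>M)"
    using assms(1,2,5-7) by (intro set_nn_integral_ge_cmult_emeasure) (auto intro!: mult_mono)
  finally show thesis
    by (rule that)
qed

lemma nonpos_if_AE_set_nn_integral_eq_0:
  fixes w :: "'a::euclidean_space \<Rightarrow> real \<Rightarrow> real"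
  assumes "open D" "open I" "continuous_on (D \<times> I) (\<lambda>(x, t). w x t)"
    and "AE t in lborel. t \<in> I \<longrightarrow> (\<integral>\<^sup>+x\<in>D. ennreal (w x t) \<partial>lborel) = 0"
  shows "\<forall>x\<in>D. \<forall>t\<in>I. w x t \<le> 0"
proof (intro ballI, rule ccontr)
  fix x0 t0 assume "x0 \<in> D" "t0 \<in> I" "\<not> w x0 t0 \<le> 0"
  define a where "a = w x0 t0 / 2"
  have "a > 0" "a < w x0 t0" using \<open>\<not> w x0 t0 \<le> 0\<close> by (auto simp: a_def)
  have "\<forall>\<^sub>F z in nhds (x0, t0). z \<in> D \<times> I \<and> a < (\<lambda>(x, t). w x t) z"
    using assms(1-3) \<open>x0 \<in> D\<close> \<open>t0 \<in> I\<close> \<open>a < w x0 t0\<close>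
    by (intro eventually_nhds_continuous_on_gt) (auto intro: open_Times)
  then obtain e t where "e > 0" and t: "t \<in> I \<longrightarrow> (\<integral>\<^sup>+x\<in>D. ennreal (w x t) \<partial>lborel) = 0"
    and near: "\<forall>x\<in>ball x0 e. x \<in> D \<and> t \<in> I \<and> a < w x t"
    using assms(4) by (rule eventually_nhds_Pair_AE_obtain) auto
  have "ball x0 e \<subseteq> D" "t \<in> I"
    using near \<open>e > 0\<close> by (auto, metis centre_in_ball)
  have "0 < ennreal a * emeasure lborel (ball x0 e)"
    using \<open>a > 0\<close> emeasure_lborel_ball_pos[OF \<open>e > 0\<close>] by (simp add: ennreal_zero_less_mult_iff)
  also have "\<dots> \<le> (\<integral>\<^sup>+x\<in>D. ennreal (w x t) \<partial>lborel)"
    using \<open>ball x0 e \<subseteq> D\<close> near by (intro set_nn_integral_ge_cmult_emeasure) auto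
  finally show False using t \<open>t \<in> I\<close> by simp
qed

lemma le_if_exp_moments_le_1:
  fixes \<rho> \<sigma> :: "'a::euclidean_space \<Rightarrow> real \<Rightarrow> real"
  assumes "open D" "open I"
    and "continuous_on (D \<times> I) (\<lambda>(x, t). \<rho> x t)" "continuous_on (D \<times> I) (\<lambda>(x, t). \<sigma> x t)"
    and "\<forall>x\<in>D. \<forall>t\<in>I. \<rho> x t > 0"
    and "\<forall>l>0. AE t in lborel. t \<in> I \<longrightarrow>
       (\<integral>\<^sup>+x\<in>D. ennreal (exp (l * (1 - \<sigma> x t / \<rho> x t)) * \<rho> x t) \<partial>lborel) \<le> 1"
  shows "\<forall>x\<in>D. \<forall>t\<in>I. \<rho> x t \<le> \<sigma> x t"
proof (intro ballI, rule ccontr)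
  fix x0 t0 assume "x0 \<in> D" "t0 \<in> I" "\<not> \<rho> x0 t0 \<le> \<sigma> x0 t0"
  define r where "r = \<rho> x0 t0 / 2"
  define d where "d = (1 - \<sigma> x0 t0 / \<rho> x0 t0) / 2"
  have "r > 0" using assms(5) \<open>x0 \<in> D\<close> \<open>t0 \<in> I\<close> by (auto simp: r_def)
  then have "d > 0" using \<open>\<not> \<rho> x0 t0 \<le> \<sigma> x0 t0\<close> by (simp add: d_def r_def)
  have "d < 1 - \<sigma> x0 t0 / \<rho> x0 t0" "r < \<rho> x0 t0"
    using \<open>d > 0\<close> \<open>r > 0\<close> by (simp_all add: d_def r_def field_simps)
  have ratio: "continuous_on (D \<times> I) (\<lambda>(x, t). 1 - \<sigma> x t / \<rho> x t)"
    using assms(3-5) unfolding split_beta' by (intro continuous_intros) (auto simp: less_le)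
  have "\<forall>\<^sub>F z in nhds (x0, t0). (z \<in> D \<times> I \<and> d < (\<lambda>(x, t). 1 - \<sigma> x t / \<rho> x t) z)
      \<and> (z \<in> D \<times> I \<and> r < (\<lambda>(x, t). \<rho> x t) z)"
    by (rule eventually_conj[OF eventually_nhds_continuous_on_gt[OF _ ratio]
          eventually_nhds_continuous_on_gt[OF _ assms(3)]])
      (use assms(1,2) \<open>x0 \<in> D\<close> \<open>t0 \<in> I\<close> \<open>d < _\<close> \<open>r < _\<close> in \<open>auto intro: open_Times\<close>)
  moreover have "AE t in lborel. \<forall>n::nat. t \<in> I \<longrightarrow> (\<integral>\<^sup>+x\<in>D.
      ennreal (exp (real (Suc n) * (1 - \<sigma> x t / \<rho> x t)) * \<rho> x t) \<partial>lborel) \<le> 1"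
    using assms(6) by (subst AE_all_countable) simp
  ultimately obtain e t where "e > 0"
    and t: "\<forall>n::nat. t \<in> I \<longrightarrow> (\<integral>\<^sup>+x\<in>D.
      ennreal (exp (real (Suc n) * (1 - \<sigma> x t / \<rho> x t)) * \<rho> x t) \<partial>lborel) \<le> 1"
    and near: "\<forall>x\<in>ball x0 e. x \<in> D \<and> t \<in> I \<and> d < 1 - \<sigma> x t / \<rho> x t \<and> r < \<rho> x t"
    by (rule eventually_nhds_Pair_AE_obtain) auto
  have "ball x0 e \<subseteq> D" "t \<in> I"
    using near \<open>e > 0\<close> by (auto, metis centre_in_ball)
  obtain n where "1 < (\<integral>\<^sup>+x\<in>D. ennreal (exp (real (Suc n) * (1 - \<sigma> x t / \<rho> x t)) * \<rho> x t) \<partial>lborel)"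
  proof (rule exp_moments_unbounded[where B="ball x0 e" and d=d and r=r
        and u="\<lambda>x. 1 - \<sigma> x t / \<rho> x t" and \<rho>="\<lambda>x. \<rho> x t"])
    show "0 < emeasure lborel (ball x0 e)" "emeasure lborel (ball x0 e) < \<infinity>"
      using emeasure_lborel_ball_pos[OF \<open>e > 0\<close>] emeasure_lborel_ball_finite by auto
  qed (use \<open>ball x0 e \<subseteq> D\<close> \<open>d > 0\<close> \<open>r > 0\<close> near in \<open>auto simp: less_imp_le\<close>)
  with t \<open>t \<in> I\<close> show False
    using leD by blast
qed

lemma set_integrable_dens_flow_slice:
  fixes D :: "(real^'n::finite) set" and f :: "real^'n \<Rightarrow> real \<Rightarrow> real"
  assumes "open D" "set_borel_measurable borel D (\<lambda>x. f x t)" "\<forall>x\<in>D. 0 \<le> f x t"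
    and "emeasure (dens_flow D f t) D \<noteq> \<infinity>"
  shows "set_integrable lborel D (\<lambda>x. f x t)"
proof -
  have meas: "(\<lambda>x. indicator D x *\<^sub>R f x t) \<in> borel_measurable lborel"
    using assms(2) by (simp add: set_borel_measurable_def)
  have "emeasure (dens_flow D f t) D = (\<integral>\<^sup>+x. ennreal (indicator D x *\<^sub>R f x t) * indicator D x \<partial>lborel)"
    unfolding dens_flow_def using meas assms(1)
    by (subst emeasure_density) (auto simp: indicator_mult_ennreal)
  also have "\<dots> = (\<integral>\<^sup>+x. ennreal (norm (indicator D x *\<^sub>R f x t)) \<partial>lborel)"
    using assms(3) by (intro nn_integral_cong) (auto simp: indicator_def)
  finally show ?thesis
    unfolding set_integrable_def using assms(4) meas by (intro integrableI_bounded) (auto simp: less_top)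
qed

lemma nn_integral_dens_flow_slice:
  fixes D :: "(real^'n::finite) set" and f :: "real^'n \<Rightarrow> real \<Rightarrow> real"
  assumes "open D" "set_borel_measurable borel D (\<lambda>x. f x t)" "set_borel_measurable borel D g"
    and "\<forall>x\<in>D. 0 \<le> f x t"
  shows "(\<integral>\<^sup>+x. indicator D x * ennreal \<bar>g x\<bar> \<partial>dens_flow D f t)
    = (\<integral>\<^sup>+x. ennreal \<bar>indicator D x * (g x * f x t)\<bar> \<partial>lborel)"
proof -
  have "(\<lambda>x. ennreal (indicator D x *\<^sub>R f x t)) \<in> borel_measurable lborel"
    "(\<lambda>x. ennreal \<bar>indicator D x *\<^sub>R g x\<bar>) \<in> borel_measurable lborel"
    using assms(2,3) by (auto simp: set_borel_measurable_def)
  then have "(\<integral>\<^sup>+x. indicator D x * ennreal \<bar>g x\<bar> \<partial>dens_flow D f t)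
      = (\<integral>\<^sup>+x. (indicator D x * ennreal (f x t)) * (indicator D x * ennreal \<bar>g x\<bar>) \<partial>lborel)"
    unfolding dens_flow_def by (intro nn_integral_density) (auto simp: indicator_mult_ennreal abs_mult)
  also have "\<dots> = (\<integral>\<^sup>+x. ennreal \<bar>indicator D x * (g x * f x t)\<bar> \<partial>lborel)"
    using assms(4) by (intro nn_integral_cong) (auto simp: indicator_def abs_mult ennreal_mult' mult.commute)
  finally show ?thesis .
qed

lemma integrable_pair_c_mult_density:
  fixes D :: "(real^'n::finite) set" and c f :: "real^'n \<Rightarrow> real \<Rightarrow> real"
  assumes "open D"
    and c: "set_borel_measurable borel (D \<times> {0..T}) (\<lambda>(x, t). c x t)"
    and f: "continuous_on (D \<times> {0<..<T}) (\<lambda>(x, t). f x t)" "\<forall>x\<in>D. \<forall>t\<in>{0<..<T}. 0 \<le> f x t"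
    and fin: "flow_int T (dens_flow D f) (\<lambda>x t. \<bar>c x t\<bar>) (D \<times> UNIV) < \<infinity>"
  shows "integrable (lborel \<Otimes>\<^sub>M lborel)
    (\<lambda>(s, x). indicator (D \<times> {0<..<T}) (x, s) * (c x s * f x s))" (is "integrable _ ?h")
proof -
  have f_meas: "set_borel_measurable borel (D \<times> {0<..<T}) (\<lambda>(x, t). f x t)"
    using assms(1) f(1) by (intro set_borel_measurable_continuous_on_open open_Times) auto
  have swap: "(\<lambda>(s, x). (x, s)) \<in> borel_measurable (lborel \<Otimes>\<^sub>M lborel)"
    unfolding lborel_prod measurable_lborel2 split_beta'
    by (intro borel_measurable_continuous_onI continuous_intros)
  have "(\<lambda>z. indicator (D \<times> {0<..<T}) z * ((\<lambda>(x, t). c x t) z * (\<lambda>(x, t). f x t) z))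
      \<in> borel_measurable borel" (is "?H \<in> _")
  proof -
    have "?H = (\<lambda>z. (indicator (D \<times> {0..T}) z *\<^sub>R (\<lambda>(x, t). c x t) z)
        * (indicator (D \<times> {0<..<T}) z *\<^sub>R (\<lambda>(x, t). f x t) z))"
      by (auto simp: fun_eq_iff indicator_def)
    then show ?thesis
      using c f_meas unfolding set_borel_measurable_def by (simp add: borel_measurable_times)
  qed
  from measurable_compose[OF swap this]
  have meas: "?h \<in> borel_measurable (lborel \<Otimes>\<^sub>M lborel)"
    by (simp add: split_beta')
  have slice: "(\<integral>\<^sup>+x. ennreal \<bar>?h (s, x)\<bar> \<partial>lborel) = indicator {0<..<T} s
      * (\<integral>\<^sup>+x. indicator (D \<times> UNIV) (x, s) * ennreal \<bar>c x s\<bar> \<partial>dens_flow D f s)" for s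
  proof (cases "s \<in> {0<..<T}")
    case True
    then have "s \<in> {0..T}" by simp
    from set_borel_measurable_slice[OF f_meas True] set_borel_measurable_slice[OF c this]
    show ?thesis
      using nn_integral_dens_flow_slice[OF assms(1), where g="\<lambda>x. c x s"] True f(2)
      by (auto simp: indicator_def)
  qed simp
  have "(\<integral>\<^sup>+z. ennreal (norm (?h z)) \<partial>(lborel \<Otimes>\<^sub>M lborel)) = flow_int T (dens_flow D f) (\<lambda>x t. \<bar>c x t\<bar>) (D \<times> UNIV)"
    unfolding flow_int_def using meas
    by (subst lborel.nn_integral_fst[symmetric]) (auto simp: slice[simplified])
  then show ?thesis
    using meas fin by (intro integrableI_bounded) auto
qed

lemma in_M_nu_dens_flow_integrable:
  fixes D :: "(real^'n::finite) set" and f :: "real^'n \<Rightarrow> real \<Rightarrow> real"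
  assumes setting: "standing_setting T D Dk \<nu> a b c p"
    and M: "in_M_nu T D Dk \<nu> a b c (dens_flow D f)"
    and f: "continuous_on (D \<times> {0<..<T}) (\<lambda>(x, t). f x t)" "\<forall>x\<in>D. \<forall>t\<in>{0<..<T}. f x t > 0"
  shows "integrable (lborel \<Otimes>\<^sub>M lborel)
      (\<lambda>(s, x). indicator (D \<times> {0<..<T}) (x, s) * (c x s * f x s))"
    and "AE t in lborel. t \<in> {0<..<T} \<longrightarrow> set_integrable lborel D (\<lambda>x. f x t)"
proof -
  have D: "open D" and c: "set_borel_measurable borel (D \<times> {0..T}) (\<lambda>(x, t). c x t)"
    using setting unfolding standing_setting_def by auto
  have f_nonneg: "\<forall>x\<in>D. \<forall>t\<in>{0<..<T}. 0 \<le> f x t"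
    using f(2) by (auto intro: less_imp_le)
  show "integrable (lborel \<Otimes>\<^sub>M lborel)
      (\<lambda>(s, x). indicator (D \<times> {0<..<T}) (x, s) * (c x s * f x s))"
    using M unfolding in_M_nu_def by (intro integrable_pair_c_mult_density[OF D c f(1) f_nonneg]) auto
  have f_meas: "set_borel_measurable borel (D \<times> {0<..<T}) (\<lambda>(x, t). f x t)"
    using D f(1) by (intro set_borel_measurable_continuous_on_open open_Times) auto
  have "AE t in lborel. t \<in> {0<..<T} \<longrightarrow> emeasure (dens_flow D f t) D \<noteq> \<infinity>"
    using M unfolding in_M_nu_def by (auto elim: AE_mp)
  then show "AE t in lborel. t \<in> {0<..<T} \<longrightarrow> set_integrable lborel D (\<lambda>x. f x t)"
    by eventually_elim
      (use D f_nonneg set_borel_measurable_slice[OF f_meas] in \<open>auto intro: set_integrable_dens_flow_slice\<close>)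
qed

theorem lemma4p1:
  fixes T p :: real and D :: "(real^'n::finite) set" and Dk :: "nat \<Rightarrow> (real^'n) set"
    and \<nu> :: "(real^'n) measure" and a :: "real^'n \<Rightarrow> real \<Rightarrow> 'n \<Rightarrow> 'n \<Rightarrow> real"
    and b :: "real^'n \<Rightarrow> real \<Rightarrow> real^'n" and c :: "real^'n \<Rightarrow> real \<Rightarrow> real"
    and \<rho> \<sigma> :: "real^'n \<Rightarrow> real \<Rightarrow> real"
  assumes setting: "standing_setting T D Dk \<nu> a b c p"
    and rho_cont: "continuous_on (D \<times> {0<..<T}) (\<lambda>(x, t). \<rho> x t)"
    and sigma_cont: "continuous_on (D \<times> {0<..<T}) (\<lambda>(x, t). \<sigma> x t)"
    and rho_pos: "\<forall>x\<in>D. \<forall>t\<in>{0<..<T}. \<rho> x t > 0"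
    and sigma_pos: "\<forall>x\<in>D. \<forall>t\<in>{0<..<T}. \<sigma> x t > 0"
    and rho_MM: "in_MM_nu T D Dk \<nu> a b c (dens_flow D \<rho>)"
    and sigma_MM: "in_MM_nu T D Dk \<nu> a b c (dens_flow D \<sigma>)"
    and rho_mass: "AE t in lborel. t \<in> {0<..<T} \<longrightarrow>
       (\<integral>x\<in>D. \<rho> x t \<partial>lborel) = measure \<nu> D + (\<integral>s\<in>{0..t}. (\<integral>x\<in>D. c x s * \<rho> x s \<partial>lborel) \<partial>lborel)"
    and sigma_mass: "AE t in lborel. t \<in> {0<..<T} \<longrightarrow>
       (\<integral>x\<in>D. \<sigma> x t \<partial>lborel) \<le> measure \<nu> D + (\<integral>s\<in>{0..t}. (\<integral>x\<in>D. c x s * \<sigma> x s \<partial>lborel) \<partial>lborel)"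
    and exp_bound: "\<forall>l>0. AE t in lborel. t \<in> {0<..<T} \<longrightarrow>
       (\<integral>\<^sup>+x\<in>D. ennreal (exp (l * (1 - \<sigma> x t / \<rho> x t)) * \<rho> x t) \<partial>lborel) \<le> 1"
  shows "\<forall>x\<in>D. \<forall>t\<in>{0<..<T}. \<sigma> x t = \<rho> x t"
proof -
  have D: "open D" and c_nonpos: "\<forall>x\<in>D. \<forall>t\<in>{0..T}. c x t \<le> 0"
    using setting unfolding standing_setting_def by auto
  note rho_int = in_M_nu_dens_flow_integrable[OF setting
      rho_MM[unfolded in_MM_nu_def, THEN conjunct1] rho_cont rho_pos]
  note sigma_int = in_M_nu_dens_flow_integrable[OF setting
      sigma_MM[unfolded in_MM_nu_def, THEN conjunct1] sigma_cont sigma_pos]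
  have le: "\<forall>x\<in>D. \<forall>t\<in>{0<..<T}. \<rho> x t \<le> \<sigma> x t"
    using le_if_exp_moments_le_1[OF D _ rho_cont sigma_cont rho_pos exp_bound] by simp
  have c_mono: "(\<integral>s\<in>{0..t}. (\<integral>x\<in>D. c x s * \<sigma> x s \<partial>lborel) \<partial>lborel)
      \<le> (\<integral>s\<in>{0..t}. (\<integral>x\<in>D. c x s * \<rho> x s \<partial>lborel) \<partial>lborel)" if "t < T" for t
    using le c_nonpos
    by (intro set_integral_slices_mono[OF sigma_int(1) rho_int(1) _ that]) (auto intro: mult_left_mono_neg)
  have "AE t in lborel. t \<in> {0<..<T} \<longrightarrow> (\<integral>\<^sup>+x\<in>D. ennreal (\<sigma> x t - \<rho> x t) \<partial>lborel) = 0"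
    using rho_mass sigma_mass rho_int(2) sigma_int(2)
    by eventually_elim (use le c_mono in \<open>force intro!: set_nn_integral_diff_eq_0\<close>)
  moreover have "continuous_on (D \<times> {0<..<T}) (\<lambda>(x, t). \<sigma> x t - \<rho> x t)"
    using continuous_on_diff[OF sigma_cont rho_cont] by (simp add: split_beta')
  ultimately have "\<forall>x\<in>D. \<forall>t\<in>{0<..<T}. \<sigma> x t - \<rho> x t \<le> 0"
    by (intro nonpos_if_AE_set_nn_integral_eq_0[OF D]) auto
  with le show ?thesis
    by force
qed

end
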